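(* Let $n\ge 2$, $c=s_{n-1}s_{n-2}\cdots s_1\in S_n$ and $h\in[n-1]$. Then none of the Plücker relations $R^k_{J,L}$ degenerates to a monomial in $\operatorname{in}_{\mathbf w}(\mathcal I_{cs_h})$.
   Context: Notation: $[a,b]=\{a,\dots,b\}$, $[b]=[1,b]$. $S_n$ is the symmetric group with simple reflections $s_i=(i,i+1)$. For $v\in S_n$, $v([k])=\{v(1),\dots,v(k)\}$; for $k$-subsets $I=\{a_1<\dots<a_k\}$, $K=\{b_1<\dots<b_k\}$ of $[n]$, $I\le K$ iff $a_r\le b_r$ for all $r$. $A_n=\mathbb C[p_I:I\subseteq[n],1\le|I|\le n-1]$; for a sequence of distinct elements, $p$ of the sequence is the signed coordinate of the underlying set (sign of the sorting permutation), and $0$ for sequences with repeats. Plücker relations: for sequences $J=(j_1,\dots,j_e)$, $L=(l_1,\dots,l_d)$ of distinct elements of $[n]$ with $1\le e\le d\le n-1$ and $k\in[e]$, $R^k_{J,L}=p_Jp_L-\sum_{1\le r_1<\dots<r_k\le d}p_{J'}p_{L'}$, with $J'$ obtained from $J$ by replacing $j_t$ by $l_{r_t}$ and $L'$ from $L$ by replacing $l_{r_t}$ by $j_t$ ($t=1,\dots,k$). $\mathcal I_{\mathrm{Fl}_n}$ is generated by all $R^k_{J,L}$, and $\mathcal I_v=\mathcal I_{\mathrm{Fl}_n}+(p_I:I\not\le v([|I|]))$. Weight $\mathbf w_I=\#\{a\in I:|I|\le a\le n-1\}$; $\operatorname{in}_{\mathbf w}(f)$ is the sum of the terms of $f$ of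 minimal weight (weight of $\prod p_I^{\alpha_I}$ is $\sum\alpha_I\mathbf w_I$); $\operatorname{in}_{\mathbf w}(\mathcal I)$ is generated by the $\operatorname{in}_{\mathbf w}(f)$, $f\in\mathcal I$. A Plücker relation $R^k_{J,L}$ degenerates to a monomial in $\operatorname{in}_{\mathbf w}(\mathcal I_v)$ if the image of $\operatorname{in}_{\mathbf w}(R^k_{J,L})$ in the quotient ring $A_n/(p_I:I\not\le v([|I|]))$ is a nonzero scalar multiple of a single monomial. *)

theory Defs
  imports "HOL-Combinatorics.Transposition" "HOL-Library.Multiset"
begin

definition sref :: "nat \<Rightarrow> nat \<Rightarrow> nat" where
  "sref i = Transposition.transpose i (Suc i)"

definition cox :: "nat \<Rightarrow> nat \<Rightarrow> nat" where
  "cox n = foldr (\<circ>) (map sref (rev [1..<n])) id"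

text \<open>Monomials in the Pluecker variables p_I: multisets of index sets I.
  Polynomials: coefficient functions from monomials to integers.\<close>
type_synonym mono = "nat set multiset"
type_synonym poly = "mono \<Rightarrow> int"

text \<open>Number of inversions of a sequence; its parity is the sign of the sorting permutation.\<close>
definition inversions :: "nat list \<Rightarrow> nat" where
  "inversions xs = card {(i, j). i < j \<and> j < length xs \<and> xs ! j < xs ! i}"

text \<open>Sign attached to p of a sequence: sign of sorting permutation, 0 if repeated entries.\<close>
definition psgn :: "nat list \<Rightarrow> int" where
  "psgn xs = (if distinct xs then (-1) ^ inversions xs else 0)"

definition plterm :: "nat list \<Rightarrow> nat list \<Rightarrow> poly" where
  "plterm J L = (\<lambda>m. if m = {# set J, set L #} then psgn J * psgn L else 0)"

text \<open>J' and L' for the index set S = {r_1 < ... < r_k} (0-based positions in L).\<close>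
definition Jrep :: "nat list \<Rightarrow> nat list \<Rightarrow> nat set \<Rightarrow> nat list" where
  "Jrep J L S = map (\<lambda>t. if t < card S then L ! (sorted_list_of_set S ! t) else J ! t) [0..<length J]"

definition Lrep :: "nat list \<Rightarrow> nat list \<Rightarrow> nat set \<Rightarrow> nat list" where
  "Lrep J L S = map (\<lambda>i. if i \<in> S then J ! card {x \<in> S. x < i} else L ! i) [0..<length L]"

definition plucker_rel :: "nat list \<Rightarrow> nat list \<Rightarrow> nat \<Rightarrow> poly" where
  "plucker_rel J L k = (\<lambda>m. plterm J L m
      - (\<Sum>S \<in> {S. S \<subseteq> {0..<length L} \<and> card S = k}. plterm (Jrep J L S) (Lrep J L S) m))"

definition wI :: "nat \<Rightarrow> nat set \<Rightarrow> nat" where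
  "wI n I = card {a \<in> I. card I \<le> a \<and> a \<le> n - 1}"

definition wmono :: "nat \<Rightarrow> mono \<Rightarrow> nat" where
  "wmono n m = sum_mset (image_mset (wI n) m)"

definition in_w :: "nat \<Rightarrow> poly \<Rightarrow> poly" where
  "in_w n f = (\<lambda>m. if f m \<noteq> 0 \<and> (\<forall>m'. f m' \<noteq> 0 \<longrightarrow> wmono n m \<le> wmono n m') then f m else 0)"

definition gale_le :: "nat set \<Rightarrow> nat set \<Rightarrow> bool" where
  "gale_le I K = (card I = card K \<and>
     (\<forall>r < card I. sorted_list_of_set I ! r \<le> sorted_list_of_set K ! r))"

text \<open>Image in A_n / (p_I : I not <= v([|I|])): kill monomials containing such a variable.\<close>
definition quot_v :: "(nat \<Rightarrow> nat) \<Rightarrow> poly \<Rightarrow> poly" where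
  "quot_v v f = (\<lambda>m. if (\<forall>I \<in># m. gale_le I (v ` {1..card I})) then f m else 0)"

definition degenerates_to_monomial :: "nat \<Rightarrow> (nat \<Rightarrow> nat) \<Rightarrow> poly \<Rightarrow> bool" where
  "degenerates_to_monomial n v f = (\<exists>!m. quot_v v (in_w n f) m \<noteq> 0)"

end

theory Submission
  imports Defs
begin

(* Suppose the image of in_w(R) modulo the non-Schubert variables were a nonzero multiple of one
   monomial p_X p_Y.  Then p_X p_Y has minimal weight in the support of R, and X, Y satisfy the
   Gale condition for v = c s_h, which for this permutation only asks X to contain the initial
   segment {1, ..., |X| - 1} (with a variant when |X| = h).  The support of R consists of p_J p_L
   and of the products p_J' p_L' of the exchanges without repeated entries; a sign computation
   shows that R vanishes identically in the two degenerate cases where an exchange reproduces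
   p_J p_L.  Otherwise the initial-segment conditions force |X - Y| <= 2, and trading an element
   of X - Y for a suitable element of Y - X gives a second monomial of the support of R which
   again satisfies the Gale condition and has no larger weight, contradicting uniqueness. *)

lemma sorted_list_of_set_nth_mem:
  "finite S \<Longrightarrow> t < card S \<Longrightarrow> sorted_list_of_set S ! t \<in> S"
  by (metis length_sorted_list_of_set nth_mem set_sorted_list_of_set)

lemma sorted_list_of_set_nth_less:
  "finite S \<Longrightarrow> a < b \<Longrightarrow> b < card S \<Longrightarrow> sorted_list_of_set S ! a < sorted_list_of_set S ! b"
  by (metis length_sorted_list_of_set sorted_list_of_set.strict_sorted_key_list_of_set
      sorted_wrt_nth_less)

lemma sorted_list_of_set_nth_less_iff:
  "finite S \<Longrightarrow> a < card S \<Longrightarrow> b < card S \<Longrightarrow>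
    sorted_list_of_set S ! a < sorted_list_of_set S ! b \<longleftrightarrow> a < b"
  by (metis sorted_list_of_set_nth_less not_less_iff_gr_or_eq)

lemma image_sorted_list_of_set_nth:
  "finite S \<Longrightarrow> (\<lambda>t. sorted_list_of_set S ! t) ` {..<card S} = S"
proof -
  assume "finite S"
  have "(\<lambda>t. sorted_list_of_set S ! t) ` {..<length (sorted_list_of_set S)} = set (sorted_list_of_set S)"
    by (auto simp: in_set_conv_nth)
  then show ?thesis using \<open>finite S\<close> by simp
qed

lemma card_less_sorted_list_of_set_nth:
  assumes "finite S" "t < card S"
  shows "card {x\<in>S. x < sorted_list_of_set S ! t} = t"
proof -
  let ?s = "\<lambda>i. sorted_list_of_set S ! i"
  have "{x\<in>S. x < ?s t} = ?s ` {..<t}"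
  proof (intro equalityI subsetI)
    fix x assume "x \<in> {x\<in>S. x < ?s t}"
    moreover obtain u where "u < card S" "?s u = x"
      using \<open>x \<in> {x\<in>S. x < ?s t}\<close> image_sorted_list_of_set_nth[OF assms(1)] by force
    ultimately show "x \<in> ?s ` {..<t}"
      using sorted_list_of_set_nth_less_iff[OF assms(1) _ assms(2)] by auto
  qed (use assms in \<open>auto intro!: sorted_list_of_set_nth_mem sorted_list_of_set_nth_less\<close>)
  moreover have "inj_on ?s {..<t}"
    using assms by (intro inj_on_nth) auto
  ultimately show ?thesis by (simp add: card_image)
qed

lemma sorted_list_of_set_nth_le_iff:
  assumes "finite S" "t < card S"
  shows "sorted_list_of_set S ! t \<le> b \<longleftrightarrow> t < card {x\<in>S. x \<le> b}"
proof
  let ?s = "sorted_list_of_set S ! t"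
  have fin: "finite {x\<in>S. x \<le> b}" using assms(1) by simp
  assume "?s \<le> b"
  then have "insert ?s {x\<in>S. x < ?s} \<subseteq> {x\<in>S. x \<le> b}"
    using sorted_list_of_set_nth_mem[OF assms] by auto
  from card_mono[OF fin this] show "t < card {x\<in>S. x \<le> b}"
    using card_less_sorted_list_of_set_nth[OF assms] assms(1) by simp
next
  let ?s = "sorted_list_of_set S ! t"
  assume "t < card {x\<in>S. x \<le> b}"
  show "?s \<le> b"
  proof (rule ccontr)
    assume "\<not> ?s \<le> b"
    then have "{x\<in>S. x \<le> b} \<subseteq> {x\<in>S. x < ?s}" by auto
    from card_mono[OF _ this] show False
      using \<open>t < card {x\<in>S. x \<le> b}\<close> card_less_sorted_list_of_set_nth[OF assms] assms(1) by simp
  qed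
qed

lemma nths_eq_map_sorted_list_of_set:
  assumes "S \<subseteq> {..<length xs}"
  shows "nths xs S = map ((!) xs) (sorted_list_of_set S)"
proof -
  have fin: "finite S" using assms finite_subset by blast
  have "filter (\<lambda>i. i \<in> S) [0..<length xs] = nths [0..<length xs] S"
    using assms by (subst filter_eq_nths) (auto intro!: arg_cong[where f = "nths _"])
  moreover have "filter (\<lambda>i. i \<in> S) [0..<length xs] = sorted_list_of_set S"
    using assms fin by (intro sorted_distinct_set_unique) (auto intro: sorted_wrt_filter)
  ultimately have "nths [0..<length xs] S = sorted_list_of_set S" by simp
  moreover have "nths xs S = nths (map ((!) xs) [0..<length xs]) S" by (simp add: map_nth)
  ultimately show ?thesis by (simp add: nths_map)
qed

lemma set_nths_eq_image: "S \<subseteq> {..<length xs} \<Longrightarrow> set (nths xs S) = (!) xs ` S"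
  by (auto simp: set_nths)

lemma set_eq_nths_Un:
  assumes "S \<subseteq> {..<length xs}"
  shows "set xs = set (nths xs S) \<union> set (nths xs ({..<length xs} - S))"
proof -
  have "set xs = (!) xs ` {..<length xs}" by (auto simp: in_set_conv_nth)
  also have "\<dots> = (!) xs ` S \<union> (!) xs ` ({..<length xs} - S)" using assms by auto
  finally show ?thesis by (simp add: set_nths_eq_image assms)
qed

lemma add_mset_pair_eq_iff:
  "{#a, b#} = {#c, d#} \<longleftrightarrow> (a = c \<and> b = d) \<or> (a = d \<and> b = c)"
  by (auto simp: add_eq_conv_ex)

lemma card_Un_eq_add_iff:
  "finite A \<Longrightarrow> finite B \<Longrightarrow> card (A \<union> B) = card A + card B \<longleftrightarrow> A \<inter> B = {}"
  using card_Un_Int[of A B] by auto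

section \<open>Signs of sequences\<close>

definition pair_sign :: "nat \<Rightarrow> nat \<Rightarrow> int" where
  "pair_sign a b = (if b < a then -1 else 1)"

definition seq_sign :: "nat list \<Rightarrow> int" where
  "seq_sign xs = (\<Prod>(i, j)\<in>{(i, j). i < j \<and> j < length xs}. pair_sign (xs ! i) (xs ! j))"

definition cross_sign :: "nat set \<Rightarrow> nat set \<Rightarrow> int" where
  "cross_sign A B = (\<Prod>(a, b)\<in>A \<times> B. pair_sign a b)"

(* The sign of the shuffle moving the positions in S in front of the remaining ones. *)
definition position_sign :: "nat \<Rightarrow> nat set \<Rightarrow> int" where
  "position_sign d S = (\<Prod>(s, t)\<in>S \<times> ({..<d} - S). if t < s then -1 else 1)"

lemma prod_neg_one_if:
  assumes "finite A"
  shows "(\<Prod>x\<in>A. if P x then -1 else (1::int)) = (-1) ^ card {x\<in>A. P x}"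
proof -
  have "(\<Prod>x\<in>A. if P x then -1 else (1::int)) = (\<Prod>x\<in>A \<inter> {x. P x}. -1) * (\<Prod>x\<in>A \<inter> - {x. P x}. 1)"
    by (rule prod.If_cases[OF assms])
  also have "A \<inter> {x. P x} = {x\<in>A. P x}" by auto
  finally show ?thesis by simp
qed

lemma psgn_eq_seq_sign:
  assumes "distinct xs"
  shows "psgn xs = seq_sign xs"
proof -
  let ?A = "{(i, j). i < j \<and> j < length xs}"
  have "finite ?A" by (rule finite_subset[of _ "{..<length xs} \<times> {..<length xs}"]) auto
  have "seq_sign xs = (\<Prod>p\<in>?A. if xs ! snd p < xs ! fst p then -1 else 1)"
    unfolding seq_sign_def pair_sign_def by (rule prod.cong) auto
  also have "\<dots> = (-1) ^ card {p\<in>?A. xs ! snd p < xs ! fst p}"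
    by (rule prod_neg_one_if[OF \<open>finite ?A\<close>])
  also have "{p\<in>?A. xs ! snd p < xs ! fst p} = {(i, j). i < j \<and> j < length xs \<and> xs ! j < xs ! i}"
    by auto
  finally show ?thesis using assms unfolding psgn_def inversions_def by simp
qed

lemma cross_sign_nonzero: "cross_sign A B \<noteq> 0"
  unfolding cross_sign_def by (cases "finite (A \<times> B)") (auto simp: pair_sign_def)

lemma seq_sign_nths:
  assumes S: "S \<subseteq> {..<length zs}"
  shows "seq_sign (nths zs S) =
    (\<Prod>(i, j)\<in>{(i, j). i < j \<and> i \<in> S \<and> j \<in> S}. pair_sign (zs ! i) (zs ! j))"
proof -
  have fin: "finite S" using S finite_subset by blast
  let ?s = "\<lambda>i. sorted_list_of_set S ! i"
  let ?A = "{(a, b). a < b \<and> b < card S}" and ?B = "{(i, j). i < j \<and> i \<in> S \<and> j \<in> S}"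
  have bij: "bij_betw (map_prod ?s ?s) ?A ?B"
  proof (rule bij_betw_imageI)
    have inj: "inj_on ?s {..<card S}"
      using fin by (intro inj_on_nth) auto
    show "inj_on (map_prod ?s ?s) ?A"
      by (rule inj_on_subset[OF map_prod_inj_on[OF inj inj]]) auto
    show "map_prod ?s ?s ` ?A = ?B"
    proof (intro equalityI subsetI)
      fix p assume "p \<in> ?B"
      then obtain a b where "a < card S" "b < card S" "p = (?s a, ?s b)" "?s a < ?s b"
        using image_sorted_list_of_set_nth[OF fin] by (auto simp: image_iff) blast
      then show "p \<in> map_prod ?s ?s ` ?A"
        using sorted_list_of_set_nth_less_iff[OF fin] by auto
    qed (auto intro: sorted_list_of_set_nth_mem[OF fin] sorted_list_of_set_nth_less[OF fin])
  qed
  have "seq_sign (nths zs S) = (\<Prod>(a, b)\<in>?A. pair_sign (zs ! ?s a) (zs ! ?s b))"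
    unfolding seq_sign_def nths_eq_map_sorted_list_of_set[OF S] using fin
    by (intro prod.cong) auto
  also have "\<dots> = (\<Prod>p\<in>?A. (\<lambda>(i, j). pair_sign (zs ! i) (zs ! j)) (map_prod ?s ?s p))"
    by (rule prod.cong) auto
  also have "\<dots> = (\<Prod>(i, j)\<in>?B. pair_sign (zs ! i) (zs ! j))"
    by (rule prod.reindex_bij_betw[OF bij])
  finally show ?thesis .
qed

lemma prod_mixed_pairs:
  fixes S :: "nat set"
  assumes "S \<subseteq> {..<d}"
  shows "(\<Prod>(i, j)\<in>{(i, j). i < j \<and> j < d \<and> (i \<in> S \<longleftrightarrow> j \<notin> S)}. g i j) =
    (\<Prod>(s, t)\<in>S \<times> ({..<d} - S). g (min s t) (max s t))"
proof -
  let ?\<phi> = "\<lambda>(s::nat, t::nat). (min s t, max s t)"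
  have bij: "bij_betw ?\<phi> (S \<times> ({..<d} - S)) {(i, j). i < j \<and> j < d \<and> (i \<in> S \<longleftrightarrow> j \<notin> S)}"
  proof (rule bij_betw_imageI)
    show "inj_on ?\<phi> (S \<times> ({..<d} - S))"
      by (auto simp: inj_on_def min_def max_def split: if_splits)
    show "?\<phi> ` (S \<times> ({..<d} - S)) = {(i, j). i < j \<and> j < d \<and> (i \<in> S \<longleftrightarrow> j \<notin> S)}"
    proof (intro equalityI subsetI)
      fix p assume "p \<in> {(i, j). i < j \<and> j < d \<and> (i \<in> S \<longleftrightarrow> j \<notin> S)}"
      then obtain i j where p: "p = (i, j)" "i < j" "j < d" "i \<in> S \<longleftrightarrow> j \<notin> S" by auto
      then show "p \<in> ?\<phi> ` (S \<times> ({..<d} - S))"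
      proof (cases "i \<in> S")
        case True
        then have "p = ?\<phi> (i, j)" "(i, j) \<in> S \<times> ({..<d} - S)" using p by auto
        then show ?thesis by (rule image_eqI)
      next
        case False
        then have "p = ?\<phi> (j, i)" "(j, i) \<in> S \<times> ({..<d} - S)" using p by auto
        then show ?thesis by (rule image_eqI)
      qed
    next
      fix p assume "p \<in> ?\<phi> ` (S \<times> ({..<d} - S))"
      then obtain s t where "p = ?\<phi> (s, t)" "s \<in> S" "t \<in> {..<d} - S" by auto
      moreover from this have "s \<noteq> t" by auto
      ultimately show "p \<in> {(i, j). i < j \<and> j < d \<and> (i \<in> S \<longleftrightarrow> j \<notin> S)}"
        using assms by (cases "s < t") auto
    qed
  qed
  have "(\<Prod>(s, t)\<in>S \<times> ({..<d} - S). g (min s t) (max s t)) =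
      (\<Prod>q\<in>S \<times> ({..<d} - S). (\<lambda>(i, j). g i j) (?\<phi> q))"
    by (rule prod.cong) auto
  also have "\<dots> = (\<Prod>(i, j)\<in>{(i, j). i < j \<and> j < d \<and> (i \<in> S \<longleftrightarrow> j \<notin> S)}. g i j)"
    by (rule prod.reindex_bij_betw[OF bij])
  finally show ?thesis ..
qed

lemma cross_sign_image:
  assumes "inj_on f (A \<union> B)"
  shows "cross_sign (f ` A) (f ` B) = (\<Prod>(a, b)\<in>A \<times> B. pair_sign (f a) (f b))"
proof -
  have inj: "inj_on (map_prod f f) (A \<times> B)"
    using assms by (auto simp: inj_on_def)
  have "cross_sign (f ` A) (f ` B) = (\<Prod>p\<in>map_prod f f ` (A \<times> B). (\<lambda>(a, b). pair_sign a b) p)"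
    unfolding cross_sign_def by (simp add: map_prod_surj_on)
  also have "\<dots> = (\<Prod>p\<in>A \<times> B. (\<lambda>(a, b). pair_sign a b) (map_prod f f p))"
    by (simp add: prod.reindex[OF inj])
  also have "\<dots> = (\<Prod>(a, b)\<in>A \<times> B. pair_sign (f a) (f b))"
    by (rule prod.cong) auto
  finally show ?thesis .
qed

lemma pair_sign_swap: "a \<noteq> b \<Longrightarrow> pair_sign b a = - pair_sign a b"
  by (auto simp: pair_sign_def)

lemma prod_mixed_pairs_pair_sign:
  assumes dist: "distinct zs" and S: "S \<subseteq> {..<length zs}"
  defines "Sc \<equiv> {..<length zs} - S"
  shows "(\<Prod>(i, j)\<in>{(i, j). i < j \<and> j < length zs \<and> (i \<in> S \<longleftrightarrow> j \<notin> S)}. pair_sign (zs ! i) (zs ! j))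
    = cross_sign (set (nths zs S)) (set (nths zs Sc)) * position_sign (length zs) S"
proof -
  have Sc: "Sc \<subseteq> {..<length zs}" unfolding Sc_def by auto
  have "(\<Prod>(i, j)\<in>{(i, j). i < j \<and> j < length zs \<and> (i \<in> S \<longleftrightarrow> j \<notin> S)}. pair_sign (zs ! i) (zs ! j))
      = (\<Prod>(s, t)\<in>S \<times> Sc. pair_sign (zs ! min s t) (zs ! max s t))"
    unfolding Sc_def by (rule prod_mixed_pairs[OF S])
  also have "\<dots> = (\<Prod>(s, t)\<in>S \<times> Sc. pair_sign (zs ! s) (zs ! t) * (if t < s then -1 else 1))"
  proof (rule prod.cong[OF refl], clarify)
    fix s t assume "s \<in> S" "t \<in> Sc"
    then have neq: "zs ! s \<noteq> zs ! t"
      using S dist unfolding Sc_def by (auto simp: nth_eq_iff_index_eq)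
    show "pair_sign (zs ! min s t) (zs ! max s t) = pair_sign (zs ! s) (zs ! t) * (if t < s then -1 else 1)"
      using pair_sign_swap[OF neq] \<open>s \<in> S\<close> \<open>t \<in> Sc\<close> unfolding Sc_def
      by (cases "s < t") (auto simp: min_def max_def)
  qed
  also have "\<dots> = cross_sign (set (nths zs S)) (set (nths zs Sc)) * position_sign (length zs) S"
  proof -
    have "inj_on ((!) zs) (S \<union> Sc)"
      using dist S Sc by (intro inj_on_nth) auto
    then have "cross_sign (set (nths zs S)) (set (nths zs Sc)) =
        (\<Prod>(s, t)\<in>S \<times> Sc. pair_sign (zs ! s) (zs ! t))"
      unfolding set_nths_eq_image[OF S] set_nths_eq_image[OF Sc] by (rule cross_sign_image)
    moreover have "position_sign (length zs) S = (\<Prod>(s, t)\<in>S \<times> Sc. if t < s then -1 else 1)"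
      unfolding position_sign_def Sc_def ..
    ultimately show ?thesis by (simp add: prod.distrib case_prod_beta)
  qed
  finally show ?thesis .
qed

lemma seq_sign_split:
  assumes dist: "distinct zs" and S: "S \<subseteq> {..<length zs}"
  defines "Sc \<equiv> {..<length zs} - S"
  shows "seq_sign zs = seq_sign (nths zs S) * seq_sign (nths zs Sc)
    * cross_sign (set (nths zs S)) (set (nths zs Sc)) * position_sign (length zs) S"
proof -
  define G where "G = (\<lambda>(i, j). pair_sign (zs ! i) (zs ! j))"
  define A1 where "A1 = {(i, j). i < j \<and> i \<in> S \<and> j \<in> S}"
  define A2 where "A2 = {(i, j). i < j \<and> i \<in> Sc \<and> j \<in> Sc}"
  define A3 where "A3 = {(i, j). i < j \<and> j < length zs \<and> (i \<in> S \<longleftrightarrow> j \<notin> S)}"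
  have Sc: "Sc \<subseteq> {..<length zs}" unfolding Sc_def by auto
  have pairs: "{(i, j). i < j \<and> j < length zs} = A1 \<union> A2 \<union> A3"
    using S unfolding A1_def A2_def A3_def Sc_def by auto
  have "finite {(i, j). i < j \<and> j < length zs}"
    by (rule finite_subset[of _ "{..<length zs} \<times> {..<length zs}"]) auto
  then have fin: "finite A1" "finite A2" "finite A3" unfolding pairs by auto
  have "A1 \<inter> A2 = {}" "(A1 \<union> A2) \<inter> A3 = {}"
    unfolding A1_def A2_def A3_def Sc_def by auto
  then have "seq_sign zs = prod G A1 * prod G A2 * prod G A3"
    unfolding seq_sign_def G_def[symmetric] pairs using fin by (simp add: prod.union_disjoint)
  also have "prod G A1 = seq_sign (nths zs S)"
    unfolding seq_sign_nths[OF S] A1_def G_def ..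
  also have "prod G A2 = seq_sign (nths zs Sc)"
    unfolding seq_sign_nths[OF Sc] A2_def G_def ..
  also have "prod G A3 = cross_sign (set (nths zs S)) (set (nths zs Sc)) * position_sign (length zs) S"
    unfolding A3_def G_def Sc_def by (rule prod_mixed_pairs_pair_sign[OF dist S])
  finally show ?thesis by (simp only: mult_ac)
qed

lemma seq_sign_append:
  assumes "distinct (xs @ ys)"
  shows "seq_sign (xs @ ys) = seq_sign xs * seq_sign ys * cross_sign (set xs) (set ys)"
proof -
  let ?T = "{..<length (xs @ ys)} - {..<length xs}"
  have "length (nths xs ?T) = 0" by (simp add: length_nths)
  moreover have "{j. j + length xs \<in> ?T} = {..<length ys}" by auto
  ultimately have rest: "nths (xs @ ys) ?T = ys" by (simp add: nths_append)
  have "position_sign (length (xs @ ys)) {..<length xs} = 1"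
    unfolding position_sign_def by (rule prod.neutral) auto
  moreover have "nths (xs @ ys) {..<length xs} = xs" by simp
  ultimately show ?thesis
    using seq_sign_split[OF assms, of "{..<length xs}"] rest by simp
qed

section \<open>The terms of a Pluecker relation\<close>

lemma length_Jrep [simp]: "length (Jrep J L S) = length J"
  by (simp add: Jrep_def)

lemma length_Lrep [simp]: "length (Lrep J L S) = length L"
  by (simp add: Lrep_def)

lemma Jrep_eq_nths_append:
  assumes "S \<subseteq> {..<length L}" "card S = k" "k \<le> length J"
  shows "Jrep J L S = nths L S @ drop k J"
  using assms finite_subset[OF assms(1)]
  by (auto intro!: nth_equalityI simp: Jrep_def nths_eq_map_sorted_list_of_set nth_append)

lemma nths_Lrep:
  assumes S: "S \<subseteq> {..<length L}" and "card S = k" "k \<le> length J"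
  shows "nths (Lrep J L S) S = take k J"
proof (rule nth_equalityI)
  have fin: "finite S" using S finite_subset by blast
  show "length (nths (Lrep J L S) S) = length (take k J)"
    using S assms(2,3) fin by (simp add: nths_eq_map_sorted_list_of_set)
  fix t assume "t < length (nths (Lrep J L S) S)"
  then have t: "t < card S" using S fin by (simp add: nths_eq_map_sorted_list_of_set)
  have "sorted_list_of_set S ! t \<in> S" by (rule sorted_list_of_set_nth_mem[OF fin t])
  then show "nths (Lrep J L S) S ! t = take k J ! t"
    using S t assms(2,3) card_less_sorted_list_of_set_nth[OF fin t]
    by (auto simp: nths_eq_map_sorted_list_of_set Lrep_def)
qed

lemma nths_Lrep_complement:
  "nths (Lrep J L S) ({..<length L} - S) = nths L ({..<length L} - S)"
  by (rule nth_equalityI) (auto simp: nths_eq_map_sorted_list_of_set Lrep_def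
      dest: sorted_list_of_set_nth_mem[rotated])

lemma plterm_nonzeroD:
  "plterm A B m \<noteq> 0 \<Longrightarrow> m = {#set A, set B#} \<and> distinct A \<and> distinct B"
  unfolding plterm_def psgn_def by (auto split: if_splits)

lemma plterm_nonzero:
  "distinct A \<Longrightarrow> distinct B \<Longrightarrow> plterm A B {#set A, set B#} \<noteq> 0"
  unfolding plterm_def psgn_def by simp

locale plucker_data =
  fixes J L :: "nat list" and k :: nat
  assumes distinct_J: "distinct J" and distinct_L: "distinct L"
    and k_pos: "1 \<le> k" and k_le_length_J: "k \<le> length J"
    and length_J_le: "length J \<le> length L"
begin

(* The entries P of J are exchanged against the entries L_at S of L at the k positions S; the
   entries Q of J stay in place. *)
abbreviation P :: "nat set" where "P \<equiv> set (take k J)"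
abbreviation Q :: "nat set" where "Q \<equiv> set (drop k J)"
abbreviation rest :: "nat set \<Rightarrow> nat set" where "rest S \<equiv> {..<length L} - S"
abbreviation L_at :: "nat set \<Rightarrow> nat set" where "L_at S \<equiv> (!) L ` S"
abbreviation choices :: "nat set set" where "choices \<equiv> {S. S \<subseteq> {0..<length L} \<and> card S = k}"
abbreviation R :: poly where "R \<equiv> plucker_rel J L k"
abbreviation exchangeable :: "nat set \<Rightarrow> bool" where
  "exchangeable S \<equiv> distinct (Jrep J L S) \<and> distinct (Lrep J L S)"
abbreviation exchange_monomial :: "nat set \<Rightarrow> mono" where
  "exchange_monomial S \<equiv> {#set (Jrep J L S), set (Lrep J L S)#}"

lemma P_Q_disjoint: "P \<inter> Q = {}"
  using distinct_J by (metis append_take_drop_id distinct_append)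

lemma set_J_eq: "set J = P \<union> Q"
  by (metis append_take_drop_id set_append)

lemma card_P: "card P = k"
  using distinct_J k_le_length_J by (simp add: distinct_card)

lemma card_Q: "card Q = length J - k"
  using distinct_J by (simp add: distinct_card)

lemma card_set_J: "card (set J) = length J"
  using distinct_J by (simp add: distinct_card)

lemma card_set_L: "card (set L) = length L"
  using distinct_L by (simp add: distinct_card)

lemma choicesD:
  assumes "S \<in> choices"
  shows "S \<subseteq> {..<length L}" "card S = k"
  using assms by (auto simp: atLeast0LessThan)

lemma finite_choices: "finite choices"
  by (rule finite_subset[of _ "Pow {0..<length L}"]) auto

lemma inj_on_L_nth: "inj_on ((!) L) {..<length L}"
  using distinct_L by (intro inj_on_nth) auto

lemma card_L_at: "S \<subseteq> {..<length L} \<Longrightarrow> card (L_at S) = card S"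
  by (meson card_image inj_on_L_nth inj_on_subset)

lemma L_at_eq_iff: "S \<subseteq> {..<length L} \<Longrightarrow> S' \<subseteq> {..<length L} \<Longrightarrow> L_at S = L_at S' \<longleftrightarrow> S = S'"
  by (rule inj_on_image_eq_iff[OF inj_on_L_nth])

lemma L_at_subset: "S \<subseteq> {..<length L} \<Longrightarrow> L_at S \<subseteq> set L"
  by auto

lemma L_at_rest:
  assumes "S \<subseteq> {..<length L}"
  shows "L_at (rest S) = set L - L_at S"
proof -
  have "L_at S \<inter> L_at (rest S) = {}"
    using inj_on_image_Int[OF inj_on_L_nth, of S "rest S"] assms by auto
  moreover have "set L = L_at S \<union> L_at (rest S)"
    using set_eq_nths_Un[OF assms] assms by (simp add: set_nths_eq_image)
  ultimately show ?thesis by blast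
qed

lemma L_at_positions: "T \<subseteq> set L \<Longrightarrow> L_at {i\<in>{..<length L}. L ! i \<in> T} = T"
  by (fastforce simp: in_set_conv_nth)

lemma choice_of_subset:
  assumes "T \<subseteq> set L" "card T = k"
  obtains S where "S \<in> choices" "L_at S = T"
proof
  let ?S = "{i\<in>{..<length L}. L ! i \<in> T}"
  show LS: "L_at ?S = T" using L_at_positions[OF assms(1)] .
  have "?S \<subseteq> {..<length L}" by auto
  then have "card ?S = k" using card_L_at[of ?S] assms(2) LS by simp
  then show "?S \<in> choices" by (auto simp: atLeast0LessThan)
qed

lemma set_Jrep:
  assumes "S \<in> choices"
  shows "set (Jrep J L S) = L_at S \<union> Q"
proof -
  note S = choicesD[OF assms]
  then show ?thesis
    by (simp add: Jrep_eq_nths_append[OF S k_le_length_J] set_nths_eq_image)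
qed

lemma set_Lrep:
  assumes "S \<in> choices"
  shows "set (Lrep J L S) = P \<union> L_at (rest S)"
proof -
  note S = choicesD[OF assms]
  then show ?thesis
    using set_eq_nths_Un[of S "Lrep J L S"]
    by (simp add: nths_Lrep[OF S k_le_length_J] nths_Lrep_complement set_nths_eq_image)
qed

lemma exchangeable_iff:
  assumes "S \<in> choices"
  shows "exchangeable S \<longleftrightarrow> L_at S \<inter> Q = {} \<and> P \<inter> L_at (rest S) = {}"
proof -
  note S = choicesD(1)[OF assms] and cS = choicesD(2)[OF assms]
  have "card (L_at (rest S)) = length L - k"
    using card_L_at[of "rest S"] S cS finite_subset[OF S] by (simp add: card_Diff_subset)
  then have cards: "card (L_at S) + card Q = length J" "card P + card (L_at (rest S)) = length L"
    using card_L_at[OF S] cS card_P card_Q k_le_length_J length_J_le by auto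
  have "exchangeable S \<longleftrightarrow> card (L_at S \<union> Q) = length J \<and> card (P \<union> L_at (rest S)) = length L"
    using distinct_card card_distinct set_Jrep[OF assms] set_Lrep[OF assms]
    by (metis length_Jrep length_Lrep)
  moreover have "card (L_at S \<union> Q) = length J \<longleftrightarrow> L_at S \<inter> Q = {}"
    using card_Un_eq_add_iff[of "L_at S" Q] cards(1) finite_subset[OF S] by simp
  moreover have "card (P \<union> L_at (rest S)) = length L \<longleftrightarrow> P \<inter> L_at (rest S) = {}"
    using card_Un_eq_add_iff[of P "L_at (rest S)"] cards(2) by simp
  ultimately show ?thesis by simp
qed

lemma exchange_sign:
  assumes "S \<in> choices" and "exchangeable S"
  shows "psgn (Jrep J L S) * psgn (Lrep J L S) * cross_sign P Q * cross_sign (L_at S) (L_at (rest S))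
    = psgn J * psgn L * cross_sign (L_at S) Q * cross_sign P (L_at (rest S))"
proof -
  note S = choicesD(1)[OF assms(1)] and cS = choicesD(2)[OF assms(1)]
  have Jrep: "Jrep J L S = nths L S @ drop k J"
    by (rule Jrep_eq_nths_append[OF S cS k_le_length_J])
  have "seq_sign J = seq_sign (take k J) * seq_sign (drop k J) * cross_sign P Q"
    using seq_sign_append[of "take k J" "drop k J"] distinct_J by simp
  moreover have "seq_sign (Jrep J L S) = seq_sign (nths L S) * seq_sign (drop k J) * cross_sign (L_at S) Q"
    using seq_sign_append[of "nths L S" "drop k J"] assms(2) S by (simp add: Jrep set_nths_eq_image)
  moreover have "seq_sign L = seq_sign (nths L S) * seq_sign (nths L (rest S))
      * cross_sign (L_at S) (L_at (rest S)) * position_sign (length L) S"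
    using seq_sign_split[OF distinct_L S] S by (simp add: set_nths_eq_image)
  moreover have "seq_sign (Lrep J L S) = seq_sign (take k J) * seq_sign (nths L (rest S))
      * cross_sign P (L_at (rest S)) * position_sign (length L) S"
    using seq_sign_split[of "Lrep J L S" S] assms(2) S
    by (simp add: nths_Lrep[OF S cS k_le_length_J] nths_Lrep_complement set_nths_eq_image)
  ultimately show ?thesis
    using assms(2) distinct_J distinct_L by (simp add: psgn_eq_seq_sign mult_ac)
qed

lemma plucker_rel_apply:
  "R m = plterm J L m - (\<Sum>S\<in>choices. plterm (Jrep J L S) (Lrep J L S) m)"
  by (simp add: plucker_rel_def)

lemma plucker_rel_nonzeroD:
  assumes "R m \<noteq> 0"
  shows "m = {#set J, set L#} \<or> (\<exists>S\<in>choices. exchangeable S \<and> m = exchange_monomial S)"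
proof (rule ccontr)
  assume none: "\<not> ?thesis"
  then have "plterm J L m = 0" using plterm_nonzeroD by blast
  moreover have "(\<Sum>S\<in>choices. plterm (Jrep J L S) (Lrep J L S) m) = 0"
    using none plterm_nonzeroD by (intro sum.neutral) blast
  ultimately show False using assms plucker_rel_apply by simp
qed

lemma plucker_rel_vanishes:
  assumes S0: "S0 \<in> choices" and unique: "\<And>S. S \<in> choices \<Longrightarrow> exchangeable S \<Longrightarrow> S = S0"
    and mono: "exchange_monomial S0 = {#set J, set L#}"
    and sign: "psgn (Jrep J L S0) * psgn (Lrep J L S0) = psgn J * psgn L"
  shows "R m = 0"
proof -
  have "(\<Sum>S\<in>choices - {S0}. plterm (Jrep J L S) (Lrep J L S) m) = 0"
    using unique plterm_nonzeroD by (intro sum.neutral) blast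
  then have "(\<Sum>S\<in>choices. plterm (Jrep J L S) (Lrep J L S) m) = plterm (Jrep J L S0) (Lrep J L S0) m"
    using sum.remove[OF finite_choices S0, of "\<lambda>S. plterm (Jrep J L S) (Lrep J L S) m"] by simp
  also have "\<dots> = plterm J L m"
    unfolding plterm_def mono sign ..
  finally show ?thesis by (simp add: plucker_rel_apply)
qed

lemma exchangeable_choice:
  assumes "T \<subseteq> set L" "card T = k" "T \<inter> Q = {}" "P \<inter> set L \<subseteq> T"
  obtains S where "S \<in> choices" "exchangeable S" "L_at S = T"
    "exchange_monomial S = {#T \<union> Q, P \<union> (set L - T)#}"
proof -
  obtain S where S: "S \<in> choices" and LS: "L_at S = T"
    using choice_of_subset[OF assms(1,2)] .
  have LSc: "L_at (rest S) = set L - T" using L_at_rest[OF choicesD(1)[OF S]] LS by simp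
  have "exchangeable S"
    using exchangeable_iff[OF S] LS LSc assms(3,4) by auto
  moreover have "exchange_monomial S = {#T \<union> Q, P \<union> (set L - T)#}"
    unfolding set_Jrep[OF S] set_Lrep[OF S] LS LSc ..
  ultimately show ?thesis using that S LS by blast
qed

lemma plucker_rel_vanishes_if_head_in_L:
  assumes PL: "P \<subseteq> set L"
  shows "R m = 0"
proof -
  obtain S0 where S0: "S0 \<in> choices" "exchangeable S0" and LS0: "L_at S0 = P"
    and mono: "exchange_monomial S0 = {#P \<union> Q, P \<union> (set L - P)#}"
    by (rule exchangeable_choice[OF PL card_P]) (use P_Q_disjoint in auto)
  show ?thesis
  proof (rule plucker_rel_vanishes[OF S0(1)])
    fix S assume S: "S \<in> choices" and "exchangeable S"
    then have "P \<inter> (set L - L_at S) = {}"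
      using exchangeable_iff[OF S] L_at_rest[OF choicesD(1)[OF S]] by simp
    then have "P \<subseteq> L_at S" using PL by blast
    moreover have "card (L_at S) = card P"
      using card_L_at choicesD[OF S] card_P by simp
    moreover have "finite (L_at S)"
      using finite_subset[OF L_at_subset[OF choicesD(1)[OF S]]] by simp
    ultimately have "L_at S = L_at S0"
      using LS0 card_subset_eq[of "L_at S" P] by simp
    then show "S = S0" using L_at_eq_iff choicesD(1) S S0 by simp
  next
    show "exchange_monomial S0 = {#set J, set L#}"
      using mono set_J_eq PL by (simp add: Un_absorb1)
  next
    show "psgn (Jrep J L S0) * psgn (Lrep J L S0) = psgn J * psgn L"
      using exchange_sign[OF S0] LS0 cross_sign_nonzero by simp
  qed
qed

lemma plucker_rel_vanishes_if_tail_in_L: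
  assumes eq: "length J = length L" and QL: "Q \<subseteq> set L"
  shows "R m = 0"
proof -
  have "card (set L - Q) = k"
    using card_Diff_subset[OF _ QL] card_set_L card_Q eq k_le_length_J by simp
  then obtain S0 where S0: "S0 \<in> choices" "exchangeable S0" and LS0: "L_at S0 = set L - Q"
    and mono: "exchange_monomial S0 = {#(set L - Q) \<union> Q, P \<union> (set L - (set L - Q))#}"
    by (rule exchangeable_choice[OF Diff_subset]) (use P_Q_disjoint in auto)
  have LS0c: "L_at (rest S0) = Q"
    using L_at_rest LS0 choicesD(1)[OF S0(1)] QL by auto
  show ?thesis
  proof (rule plucker_rel_vanishes[OF S0(1)])
    fix S assume S: "S \<in> choices" and "exchangeable S"
    then have "L_at S \<subseteq> set L - Q"
      using exchangeable_iff[OF S] L_at_subset choicesD(1)[OF S] by blast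
    moreover have "card (L_at S) = card (set L - Q)"
      using card_L_at choicesD[OF S] \<open>card (set L - Q) = k\<close> by simp
    ultimately have "L_at S = L_at S0"
      using LS0 card_subset_eq[of "set L - Q" "L_at S"] by simp
    then show "S = S0" using L_at_eq_iff choicesD(1) S S0 by simp
  next
    have "(set L - Q) \<union> Q = set L" "P \<union> (set L - (set L - Q)) = set J"
      using QL set_J_eq by auto
    then show "exchange_monomial S0 = {#set J, set L#}"
      using mono by (simp add: add_mset_commute)
  next
    show "psgn (Jrep J L S0) * psgn (Lrep J L S0) = psgn J * psgn L"
      using exchange_sign[OF S0] LS0 LS0c cross_sign_nonzero by (simp add: mult_ac)
  qed
qed

lemma plucker_rel_support:
  assumes "R m \<noteq> 0"
  obtains X Y where "m = {#X, Y#}" "card X = length J" "card Y = length L"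
    "X \<inter> Y = set J \<inter> set L" "X \<union> Y = set J \<union> set L" "Q \<subseteq> X"
proof (cases "m = {#set J, set L#}")
  case True
  then show ?thesis using that card_set_J card_set_L set_J_eq by simp
next
  case False
  then obtain S where S: "S \<in> choices" "exchangeable S" "m = exchange_monomial S"
    using plucker_rel_nonzeroD[OF assms] by blast
  have "L_at S \<inter> Q = {}" "P \<inter> L_at (rest S) = {}"
    using exchangeable_iff[OF S(1)] S(2) by auto
  moreover have "L_at (rest S) = set L - L_at S" "L_at S \<subseteq> set L"
    using L_at_rest L_at_subset choicesD(1)[OF S(1)] by auto
  ultimately have "set (Jrep J L S) \<inter> set (Lrep J L S) = set J \<inter> set L"
    "set (Jrep J L S) \<union> set (Lrep J L S) = set J \<union> set L"
    unfolding set_Jrep[OF S(1)] set_Lrep[OF S(1)] set_J_eq using P_Q_disjoint by auto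
  moreover have "card (set (Jrep J L S)) = length J" "card (set (Lrep J L S)) = length L"
    using S(2) by (simp_all add: distinct_card)
  ultimately show ?thesis
    using that S(3) set_Jrep[OF S(1)] by simp
qed

context
  assumes head_not_in_L: "\<not> P \<subseteq> set L"
    and tail_not_in_L: "\<not> (length J = length L \<and> Q \<subseteq> set L)"
begin

lemma exchange_monomial_ne:
  assumes S: "S \<in> choices" and "exchangeable S"
  shows "exchange_monomial S \<noteq> {#set J, set L#}"
proof
  assume eq: "exchange_monomial S = {#set J, set L#}"
  have "L_at S \<inter> Q = {}" using exchangeable_iff[OF S] assms(2) by auto
  show False
  proof (cases "set (Jrep J L S) = set J")
    case True
    then have "L_at S = P"
      using set_Jrep[OF S] set_J_eq P_Q_disjoint \<open>L_at S \<inter> Q = {}\<close> by blast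
    then show False using head_not_in_L L_at_subset[OF choicesD(1)[OF S]] by simp
  next
    case False
    then have "set (Jrep J L S) = set L" using add_mset_pair_eq_iff[THEN iffD1, OF eq] by blast
    then have "card (set (Jrep J L S)) = length L" using card_set_L by simp
    then have "length J = length L" using assms(2) distinct_card[of "Jrep J L S"] by simp
    moreover have "Q \<subseteq> set L" using \<open>set (Jrep J L S) = set L\<close> set_Jrep[OF S] by auto
    ultimately show False using tail_not_in_L by simp
  qed
qed

lemma exchange_monomial_inj:
  assumes S: "S \<in> choices" "exchangeable S" and S': "S' \<in> choices" "exchangeable S'"
    and eq: "exchange_monomial S = exchange_monomial S'"
  shows "S = S'"
proof (cases "set (Jrep J L S) = set (Jrep J L S')")
  case True
  moreover have "L_at S \<inter> Q = {}" "L_at S' \<inter> Q = {}"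
    using exchangeable_iff S S' by auto
  moreover have "L_at S \<union> Q = L_at S' \<union> Q"
    using True set_Jrep[OF S(1)] set_Jrep[OF S'(1)] by simp
  ultimately have "L_at S = L_at S'" by blast
  then show ?thesis using L_at_eq_iff choicesD(1) S(1) S'(1) by simp
next
  case False
  then have J_L: "set (Jrep J L S) = set (Lrep J L S')"
    using add_mset_pair_eq_iff[THEN iffD1, OF eq] by blast
  then have "card (set (Jrep J L S)) = card (set (Lrep J L S'))" by simp
  then have "length J = length L"
    using S(2) S'(2) distinct_card[of "Jrep J L S"] distinct_card[of "Lrep J L S'"] by simp
  moreover have "Q \<subseteq> set L"
  proof -
    have "Q \<subseteq> P \<union> L_at (rest S')" using J_L set_Jrep[OF S(1)] set_Lrep[OF S'(1)] by auto
    then have "Q \<subseteq> L_at (rest S')" using P_Q_disjoint by blast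
    then show ?thesis using L_at_subset[of "rest S'"] by blast
  qed
  ultimately show ?thesis using tail_not_in_L by simp
qed

lemma plucker_rel_nonzero_self: "R {#set J, set L#} \<noteq> 0"
proof -
  have "(\<Sum>S\<in>choices. plterm (Jrep J L S) (Lrep J L S) {#set J, set L#}) = 0"
  proof (intro sum.neutral ballI)
    fix S assume S: "S \<in> choices"
    show "plterm (Jrep J L S) (Lrep J L S) {#set J, set L#} = 0"
      using plterm_nonzeroD exchange_monomial_ne[OF S] by metis
  qed
  then show ?thesis
    using plterm_nonzero[OF distinct_J distinct_L] by (simp add: plucker_rel_apply)
qed

lemma plucker_rel_nonzero_exchange:
  assumes S: "S \<in> choices" "exchangeable S"
  shows "R (exchange_monomial S) \<noteq> 0"
proof -
  have "(\<Sum>S'\<in>choices - {S}. plterm (Jrep J L S') (Lrep J L S') (exchange_monomial S)) = 0"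
  proof (intro sum.neutral ballI)
    fix S' assume S': "S' \<in> choices - {S}"
    show "plterm (Jrep J L S') (Lrep J L S') (exchange_monomial S) = 0"
    proof (rule ccontr)
      assume "plterm (Jrep J L S') (Lrep J L S') (exchange_monomial S) \<noteq> 0"
      then have "exchangeable S'" "exchange_monomial S = exchange_monomial S'"
        using plterm_nonzeroD by blast+
      then show False using exchange_monomial_inj[OF S] S' by blast
    qed
  qed
  then have "(\<Sum>S'\<in>choices. plterm (Jrep J L S') (Lrep J L S') (exchange_monomial S)) =
      plterm (Jrep J L S) (Lrep J L S) (exchange_monomial S)"
    using sum.remove[OF finite_choices S(1),
        of "\<lambda>S'. plterm (Jrep J L S') (Lrep J L S') (exchange_monomial S)"] by simp
  moreover have "plterm J L (exchange_monomial S) = 0"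
    unfolding plterm_def using exchange_monomial_ne[OF S] by auto
  ultimately show ?thesis
    using plterm_nonzero S(2) by (simp add: plucker_rel_apply)
qed

lemma plucker_rel_nonzero_pair:
  assumes one: "card (P - set L) = 1"
    and DX: "set J \<inter> set L \<subseteq> X" and QX: "Q \<subseteq> X" and XW: "X \<subseteq> set J \<union> set L"
    and cX: "card X = length J"
  shows "R {#X, (set J \<union> set L - X) \<union> (set J \<inter> set L)#} \<noteq> 0"
proof (cases "X = set J")
  case True
  then have "(set J \<union> set L - X) \<union> (set J \<inter> set L) = set L" by blast
  then show ?thesis using True plucker_rel_nonzero_self by simp
next
  case False
  obtain u where u: "P - set L = {u}" using one card_1_singletonE by blast
  have finX: "finite X" using finite_subset[OF XW] by simp
  have "u \<notin> X"
  proof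
    assume "u \<in> X"
    then have "P - set L \<subseteq> X" using u by simp
    moreover have "P \<inter> set L \<subseteq> X" using DX set_J_eq by blast
    ultimately have "set J \<subseteq> X" using QX set_J_eq by blast
    then have "X = set J" using card_subset_eq[OF finX, of "set J"] cX card_set_J by simp
    then show False using False by simp
  qed
  define T where "T = X - Q"
  have "T \<subseteq> (P - set L) \<union> set L" using XW set_J_eq unfolding T_def by blast
  then have TL: "T \<subseteq> set L" using \<open>u \<notin> X\<close> unfolding u T_def by blast
  have "card T = k"
    using card_Diff_subset[OF finite_subset[OF QX finX] QX] cX card_Q k_le_length_J
    unfolding T_def by simp
  moreover have "T \<inter> Q = {}" "P \<inter> set L \<subseteq> T"
    using DX set_J_eq P_Q_disjoint unfolding T_def by blast+
  ultimately obtain S where S: "S \<in> choices" "exchangeable S" and "L_at S = T"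
    and mono: "exchange_monomial S = {#T \<union> Q, P \<union> (set L - T)#}"
    by (rule exchangeable_choice[OF TL])
  have "T \<union> Q = X" using QX unfolding T_def by blast
  moreover have "u \<in> P" "u \<notin> set L" "\<And>p. p \<in> P \<Longrightarrow> p \<notin> set L \<Longrightarrow> p = u"
    using u by auto
  then have "P \<union> (set L - T) = (set J \<union> set L - X) \<union> (set J \<inter> set L)"
    using \<open>u \<notin> X\<close> QX set_J_eq P_Q_disjoint unfolding T_def by blast
  ultimately show ?thesis using plucker_rel_nonzero_exchange[OF S] mono by simp
qed

end

end

section \<open>The Schubert condition for \<open>c s\<^sub>h\<close>\<close>

lemma sref_apply: "sref i x = (if x = i then Suc i else if x = Suc i then i else x)"
  unfolding sref_def Transposition.transpose_def by simp

lemma cox_Suc: "1 \<le> n \<Longrightarrow> cox (Suc n) = sref n \<circ> cox n"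
  unfolding cox_def by (simp add: upt_Suc_append)

lemma cox_apply:
  "1 \<le> n \<Longrightarrow> cox n x = (if x = 1 then n else if 2 \<le> x \<and> x \<le> n then x - 1 else x)"
proof (induction n rule: dec_induct)
  case base
  then show ?case by (simp add: cox_def)
next
  case (step m)
  then show ?case by (auto simp: cox_Suc sref_apply)
qed

lemma sref_image_atLeastAtMost: "1 \<le> h \<Longrightarrow> c \<noteq> h \<Longrightarrow> sref h ` {1..c} = {1..c}"
  unfolding sref_def by (rule transpose_image_eq) auto

lemma sref_image_atLeastAtMost_self: "1 \<le> h \<Longrightarrow> sref h ` {1..h} = insert (Suc h) {1..<h}"
  unfolding sref_def by (auto simp: in_transpose_image_iff Transposition.transpose_def)

lemma cox_image_atLeastAtMost:
  assumes "1 \<le> c" "c \<le> n"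
  shows "cox n ` {1..c} = insert n {1..<c}"
proof (intro equalityI subsetI)
  fix y assume "y \<in> cox n ` {1..c}"
  then show "y \<in> insert n {1..<c}" using assms by (auto simp: cox_apply)
next
  fix y assume y: "y \<in> insert n {1..<c}"
  show "y \<in> cox n ` {1..c}"
  proof (cases "y = n")
    case True
    then have "y = cox n 1" using assms by (simp add: cox_apply)
    then show ?thesis using assms by auto
  next
    case False
    then have "y = cox n (Suc y)" "Suc y \<in> {1..c}" using y assms by (auto simp: cox_apply)
    then show ?thesis by (rule image_eqI)
  qed
qed

lemma cox_sref_image:
  assumes "1 \<le> h" "h < n" "1 \<le> c" "c < n"
  shows "(cox n \<circ> sref h) ` {1..c} =
    (if c \<noteq> h then insert n {1..<c} else if h = 1 then {1} else insert h (insert n {1..<h - 1}))"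
proof (cases "c = h")
  case False
  have "(cox n \<circ> sref h) ` {1..c} = cox n ` (sref h ` {1..c})" by (simp only: image_comp)
  also have "\<dots> = insert n {1..<c}"
    unfolding sref_image_atLeastAtMost[OF assms(1) False] using cox_image_atLeastAtMost assms by simp
  finally show ?thesis using False by simp
next
  case True
  have "cox n (Suc h) = h" using assms by (simp add: cox_apply)
  have "(cox n \<circ> sref h) ` {1..h} = cox n ` (sref h ` {1..h})" by (simp only: image_comp)
  also have "\<dots> = insert h (cox n ` {1..<h})"
    using \<open>cox n (Suc h) = h\<close> by (simp only: sref_image_atLeastAtMost_self[OF assms(1)] image_insert)
  finally have image: "(cox n \<circ> sref h) ` {1..h} = insert h (cox n ` {1..<h})" .
  moreover have "cox n ` {1..<h} = insert n {1..<h - 1}" if "h \<noteq> 1"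
  proof -
    have "{1..<h} = {1..h - 1}" using assms by auto
    then show ?thesis using cox_image_atLeastAtMost[of "h - 1" n] assms that by simp
  qed
  ultimately show ?thesis using True by auto
qed

(* The Gale condition I <= (c s_h)({1..c}) for card I = c, made explicit (gale_le_cox_sref_iff). *)
definition admissible :: "nat \<Rightarrow> nat \<Rightarrow> nat set \<Rightarrow> bool" where
  "admissible h c I \<longleftrightarrow>
    (if c = h then {1..<h - 1} \<subseteq> I \<and> (h - 1 \<in> I \<or> h \<in> I) else {1..<c} \<subseteq> I)"

lemma gale_le_sorted_iff:
  assumes "finite I" "sorted_wrt (<) xs" "card I = length xs"
  shows "gale_le I (set xs) \<longleftrightarrow> (\<forall>r<length xs. r < card {x\<in>I. x \<le> xs ! r})"
proof -
  have "sorted_list_of_set (set xs) = xs" "card (set xs) = length xs"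
    using assms(2) by (simp_all add: strict_sorted_iff distinct_card
        sorted_list_of_set.idem_if_sorted_distinct)
  then show ?thesis
    using sorted_list_of_set_nth_le_iff[OF assms(1)] assms(3) by (simp add: gale_le_def)
qed

lemma le_card_atMost_iff:
  assumes "finite I" "0 \<notin> I"
  shows "t \<le> card {x\<in>I. x \<le> t} \<longleftrightarrow> {1..t} \<subseteq> I"
proof -
  have sub: "{x\<in>I. x \<le> t} \<subseteq> {1..t}"
    using assms(2) by (auto simp: Suc_le_eq intro: gr0I)
  show ?thesis
  proof
    assume "t \<le> card {x\<in>I. x \<le> t}"
    then have "{x\<in>I. x \<le> t} = {1..t}"
      using card_mono[OF _ sub] by (intro card_subset_eq[OF _ sub]) auto
    then show "{1..t} \<subseteq> I" by blast
  next
    assume "{1..t} \<subseteq> I"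
    then have "{1..t} \<subseteq> {x\<in>I. x \<le> t}" by auto
    from card_mono[OF _ this] show "t \<le> card {x\<in>I. x \<le> t}" using assms(1) by simp
  qed
qed

lemma all_initial_segments_subset_iff: "(\<forall>r<m. {1..Suc r} \<subseteq> I) \<longleftrightarrow> {1..m} \<subseteq> I"
proof
  assume all: "\<forall>r<m. {1..Suc r} \<subseteq> I"
  show "{1..m} \<subseteq> I"
  proof
    fix x assume "x \<in> {1..m}"
    then show "x \<in> I" using all[rule_format, of "x - 1"] by (cases x) auto
  qed
qed auto

lemma gale_le_insert_initial:
  assumes I: "I \<subseteq> {1..n}" "card I = c" and c: "1 \<le> c" "c < n"
  shows "gale_le I (insert n {1..<c}) \<longleftrightarrow> {1..<c} \<subseteq> I"
proof -
  obtain m where m: "c = Suc m" using c by (cases c) auto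
  have fin: "finite I" and "0 \<notin> I" using I finite_subset by auto
  let ?xs = "[1..<c] @ [n]"
  have xs: "sorted_wrt (<) ?xs" "set ?xs = insert n {1..<c}" "length ?xs = Suc m"
    using c m by (auto simp: sorted_wrt_append)
  have nth: "?xs ! r = Suc r" if "r < m" for r using that m by (simp add: nth_append del: upt_Suc)
  have "{x\<in>I. x \<le> n} = I" using I by auto
  then have "m < card {x\<in>I. x \<le> ?xs ! m}"
    using I m by (simp add: nth_append del: upt_Suc)
  then have "gale_le I (insert n {1..<c}) \<longleftrightarrow> (\<forall>r<m. r < card {x\<in>I. x \<le> ?xs ! r})"
    using gale_le_sorted_iff[OF fin xs(1)] xs(2,3) I(2) m by (simp add: All_less_Suc)
  also have "\<dots> \<longleftrightarrow> (\<forall>r<m. r < card {x\<in>I. x \<le> Suc r})"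
    using nth by auto
  also have "\<dots> \<longleftrightarrow> {1..<c} \<subseteq> I"
  proof -
    have "r < card {x\<in>I. x \<le> Suc r} \<longleftrightarrow> {1..Suc r} \<subseteq> I" for r
      using le_card_atMost_iff[OF fin \<open>0 \<notin> I\<close>, of "Suc r"] by (simp add: Suc_le_eq)
    then show ?thesis
      using all_initial_segments_subset_iff[of m I] m by (simp add: atLeastLessThanSuc_atLeastAtMost)
  qed
  finally show ?thesis .
qed

lemma gale_le_insert_initial_pair:
  assumes I: "I \<subseteq> {1..n}" "card I = h" and h: "2 \<le> h" "h < n"
  shows "gale_le I (insert h (insert n {1..<h - 1})) \<longleftrightarrow>
    {1..<h - 1} \<subseteq> I \<and> (h - 1 \<in> I \<or> h \<in> I)"
proof -
  obtain m where m: "h = Suc (Suc m)" using h by (metis add_2_eq_Suc le_Suc_ex)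
  have fin: "finite I" and "0 \<notin> I" using I finite_subset by auto
  let ?xs = "[1..<Suc m] @ [h, n]"
  have xs: "sorted_wrt (<) ?xs" "set ?xs = insert h (insert n {1..<h - 1})" "length ?xs = Suc (Suc m)"
    using h m by (auto simp: sorted_wrt_append)
  have nth: "?xs ! r = Suc r" if "r < m" for r using that by (simp add: nth_append del: upt_Suc)
  have "{x\<in>I. x \<le> n} = I" using I by auto
  then have "Suc m < card {x\<in>I. x \<le> ?xs ! Suc m}"
    using I m by (simp add: nth_append del: upt_Suc)
  moreover have "?xs ! m = h" by (simp add: nth_append del: upt_Suc)
  ultimately have "gale_le I (insert h (insert n {1..<h - 1})) \<longleftrightarrow>
      (\<forall>r<m. r < card {x\<in>I. x \<le> ?xs ! r}) \<and> m < card {x\<in>I. x \<le> h}"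
    using gale_le_sorted_iff[OF fin xs(1)] xs(2,3) I(2) m by (simp add: All_less_Suc conj_commute del: upt_Suc)
  also have "\<dots> \<longleftrightarrow> {1..m} \<subseteq> I \<and> m < card {x\<in>I. x \<le> h}"
  proof -
    have "r < card {x\<in>I. x \<le> Suc r} \<longleftrightarrow> {1..Suc r} \<subseteq> I" for r
      using le_card_atMost_iff[OF fin \<open>0 \<notin> I\<close>, of "Suc r"] by (simp add: Suc_le_eq)
    then show ?thesis using nth all_initial_segments_subset_iff[of m I] by simp
  qed
  also have "\<dots> \<longleftrightarrow> {1..m} \<subseteq> I \<and> (Suc m \<in> I \<or> h \<in> I)"
  proof (cases "{1..m} \<subseteq> I")
    case True
    then have "{x\<in>I. x \<le> h} = {1..m} \<union> ({Suc m, h} \<inter> I)"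
      using \<open>0 \<notin> I\<close> m by (auto simp: le_Suc_eq Suc_le_eq intro: gr0I)
    moreover have "card ({1..m} \<union> ({Suc m, h} \<inter> I)) = m + card ({Suc m, h} \<inter> I)"
      using m by (subst card_Un_disjoint) auto
    ultimately have "card {x\<in>I. x \<le> h} = m + card ({Suc m, h} \<inter> I)" by simp
    then show ?thesis using True by (auto simp: card_gt_0_iff)
  qed simp
  finally show ?thesis using m by (simp add: atLeastLessThanSuc_atLeastAtMost)
qed

lemma gale_le_singleton_one:
  assumes "I \<subseteq> {1..n}" "card I = 1"
  shows "gale_le I {1} \<longleftrightarrow> 1 \<in> I"
proof -
  have fin: "finite I" using assms finite_subset by auto
  have "{x\<in>I. x \<le> 1} = {1} \<inter> I" using assms(1) by auto
  then show ?thesis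
    using gale_le_sorted_iff[OF fin, of "[1]"] assms(2) by (auto simp: card_gt_0_iff)
qed

lemma gale_le_cox_sref_iff:
  assumes h: "1 \<le> h" "h < n" and I: "I \<subseteq> {1..n}" "1 \<le> card I" "card I < n"
  shows "gale_le I ((cox n \<circ> sref h) ` {1..card I}) \<longleftrightarrow> admissible h (card I) I"
proof (cases "card I = h")
  case False
  then show ?thesis
    unfolding cox_sref_image[OF h I(2,3)] admissible_def
    using gale_le_insert_initial[OF I(1) refl I(2,3)] by simp
next
  case True
  show ?thesis
  proof (cases "h = 1")
    case True
    moreover have "0 \<notin> I" using I by auto
    ultimately show ?thesis
      unfolding cox_sref_image[OF h I(2,3)] admissible_def
      using gale_le_singleton_one[OF I(1)] \<open>card I = h\<close> by auto
  next
    case False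
    then show ?thesis
      unfolding cox_sref_image[OF h I(2,3)] admissible_def
      using gale_le_insert_initial_pair[OF I(1) \<open>card I = h\<close>] \<open>card I = h\<close> h by simp
  qed
qed

section \<open>Exchanges preserving the Schubert condition\<close>

lemma admissible_mono: "admissible h c I \<Longrightarrow> I \<subseteq> I' \<Longrightarrow> admissible h c I'"
  unfolding admissible_def by (auto split: if_splits)

lemma card_le_Max:
  assumes "finite Y" "Y \<noteq> {}" "0 \<notin> Y"
  shows "card Y \<le> Max Y"
proof -
  have "Y \<subseteq> {1..Max Y}" using assms by (auto simp: Suc_le_eq intro!: gr0I)
  from card_mono[OF _ this] show ?thesis by simp
qed

lemma admissible_remove_Max:
  assumes adm: "admissible h d Y" and Y: "finite Y" "0 \<notin> Y" "card Y = d" and d: "2 \<le> d"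
  shows "admissible h d (Y - {Max Y})"
proof -
  have "Y \<noteq> {}" using Y d by auto
  then have dM: "d \<le> Max Y" using card_le_Max Y by metis
  show ?thesis
  proof (cases "d = h")
    case False
    then show ?thesis using adm dM by (auto simp: admissible_def)
  next
    case True
    have "h - 1 \<in> Y - {Max Y} \<or> h \<in> Y - {Max Y}"
    proof (rule ccontr)
      assume "\<not> ?thesis"
      then have "h = Max Y" "h - 1 \<notin> Y" using adm True dM d by (auto simp: admissible_def)
      moreover have "Y \<subseteq> {1..h}" using Y \<open>h = Max Y\<close> by (auto simp: Suc_le_eq intro!: gr0I)
      ultimately have "Y = {1..h}" using card_subset_eq[of "{1..h}" Y] Y True by simp
      then show False using \<open>h - 1 \<notin> Y\<close> True d by simp
    qed
    then show ?thesis using adm True dM by (auto simp: admissible_def)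
  qed
qed

lemma admissible_common_part:
  assumes X: "admissible h e X" "0 \<notin> X" and Y: "admissible h d Y" and e: "1 \<le> e" "e < d"
  obtains C where "C \<subseteq> X \<inter> Y" "e - 1 \<le> card C" "\<forall>c\<in>C. c < d" "admissible h e C"
proof (cases "e = h")
  case True
  then obtain b where b: "b \<in> X" "b = h - 1 \<or> b = h" using X(1) by (auto simp: admissible_def)
  let ?C = "insert b {1..<h - 1}"
  have "b \<in> {1..<d}" using b X(2) True e by (cases "b = 0") auto
  then have Cd: "?C \<subseteq> {1..<d}" using True e by auto
  moreover have "{1..<d} \<subseteq> Y" using Y True e by (auto simp: admissible_def)
  moreover have "?C \<subseteq> X" using X b True by (auto simp: admissible_def)
  ultimately have "?C \<subseteq> X \<inter> Y" by blast
  moreover have "e - 1 \<le> card ?C" using b True by (auto simp: card_insert_if)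
  moreover have "\<forall>c\<in>?C. c < d" using Cd by auto
  moreover have "admissible h e ?C" using b True by (auto simp: admissible_def)
  ultimately show ?thesis by (rule that)
next
  case False
  have "{1..<e} \<subseteq> Y"
  proof (cases "d = h")
    case True
    then have "{1..<e} \<subseteq> {1..<h - 1}" using e by auto
    also have "\<dots> \<subseteq> Y" using Y True by (simp add: admissible_def)
    finally show ?thesis .
  next
    case False
    then show ?thesis using Y e by (auto simp: admissible_def)
  qed
  then show ?thesis
    using that[of "{1..<e}"] X False e by (auto simp: admissible_def)
qed

lemma admissible_exchange_less:
  assumes X: "finite X" "0 \<notin> X" "card X = e" "admissible h e X"
    and Y: "finite Y" "0 \<notin> Y" "card Y = d" "admissible h d Y"
    and e: "1 \<le> e" "e < d" and ne: "X - Y \<noteq> {}"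
  obtains x y where "X - Y = {x}" "y \<in> Y - X" "d \<le> y"
    "admissible h e (insert y (X - {x}))" "admissible h d (insert x (Y - {y}))"
proof -
  obtain C where C: "C \<subseteq> X \<inter> Y" "e - 1 \<le> card C" "\<forall>c\<in>C. c < d" "admissible h e C"
    using admissible_common_part[OF X(4) X(2) Y(4) e] .
  have finC: "finite C" using C(1) X(1) finite_subset by blast
  have "card (X - Y) \<le> card (X - C)" using C(1) X(1) by (intro card_mono) auto
  also have "\<dots> = card X - card C" using C(1) finC by (simp add: card_Diff_subset)
  moreover have "card (X - Y) \<noteq> 0" using ne X(1) by simp
  ultimately have "card (X - Y) = 1" using C(2) X(3) by linarith
  then obtain x where x: "X - Y = {x}" by (rule card_1_singletonE)
  have "card (X \<inter> Y) = e - 1"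
    using \<open>card (X - Y) = 1\<close> X(1,3) by (simp add: card_Diff_subset_Int Int_commute)
  then have XY: "X \<inter> Y = C"
    using card_subset_eq[OF _ C(1)] C(2) card_mono[OF _ C(1)] X(1) by simp
  define y where "y = Max Y"
  have "Y \<noteq> {}" using Y e by auto
  then have y: "y \<in> Y" "d \<le> y" using card_le_Max[OF Y(1) _ Y(2)] Y(1,3) by (auto simp: y_def)
  have "y \<notin> X"
  proof
    assume "y \<in> X"
    then have "y \<in> C" using y XY by blast
    then have "y < d" using C(3) by blast
    then show False using y(2) by simp
  qed
  have "C \<subseteq> insert y (X - {x})" using XY x by blast
  then have "admissible h e (insert y (X - {x}))" by (rule admissible_mono[OF C(4)])
  moreover have "admissible h d (Y - {y})"
    unfolding y_def using admissible_remove_Max[OF Y(4) Y(1,2,3)] e by simp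
  then have "admissible h d (insert x (Y - {y}))" by (rule admissible_mono) blast
  ultimately show ?thesis using that[OF x _ y(2)] y(1) \<open>y \<notin> X\<close> by blast
qed

lemma admissible_insert_initial: "b = h - 1 \<or> b = h \<Longrightarrow> admissible h h (insert b {1..<h - 1})"
  by (auto simp: admissible_def)

lemma admissible_same_size_inter:
  assumes X: "finite X" "card X = e" "admissible h e X"
    and Y: "finite Y" "card Y = e" "admissible h e Y"
    and two: "2 \<le> card (X - Y)"
  shows "e = h" "X \<inter> Y = {1..<h - 1}" "card (X - Y) = 2" "card (Y - X) = 2"
proof -
  have card_diff: "card (X - Y) \<le> e - card C" if "C \<subseteq> X \<inter> Y" for C
  proof -
    have "card (X - Y) \<le> card (X - C)" using that X(1) by (intro card_mono) auto
    also have "\<dots> = e - card C" using that X(1,2) finite_subset by (subst card_Diff_subset) auto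
    finally show ?thesis .
  qed
  show eh: "e = h"
  proof (rule ccontr)
    assume "e \<noteq> h"
    then have "{1..<e} \<subseteq> X \<inter> Y" using X(3) Y(3) by (simp add: admissible_def)
    then show False using card_diff[of "{1..<e}"] two by simp
  qed
  have C: "{1..<h - 1} \<subseteq> X \<inter> Y" using X(3) Y(3) eh by (simp add: admissible_def)
  show c2: "card (X - Y) = 2" using card_diff[OF C] two eh by simp
  then have "card (X \<inter> Y) = card {1..<h - 1}" using X(1,2) two eh by (simp add: card_Diff_subset_Int)
  then show "X \<inter> Y = {1..<h - 1}" using card_subset_eq[OF _ C] X(1) by simp
  show "card (Y - X) = 2"
    using c2 X(1,2) Y(1,2) by (simp add: card_Diff_subset_Int Int_commute)
qed

lemma admissible_exchange_eq:
  assumes X: "finite X" "card X = e" "admissible h e X"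
    and Y: "finite Y" "card Y = e" "admissible h e Y"
    and two: "2 \<le> card (X - Y)" and q: "q \<in> X - Y"
  obtains x y where "x \<in> X - Y" "x \<noteq> q" "y \<in> Y - X" "card (X - Y) = 2"
    "admissible h e (insert y (X - {x}))" "admissible h e (insert x (Y - {y}))"
proof -
  let ?C = "{1..<h - 1}"
  note inter = admissible_same_size_inter[OF X Y two]
  obtain x where x: "x \<in> X - Y" "x \<noteq> q"
    using inter(3) q by (metis card_2_iff insertCI)
  obtain c0 where "c0 \<in> X" and c0_h: "c0 = h - 1 \<or> c0 = h"
    using X(3) inter(1) by (auto simp: admissible_def)
  moreover have "c0 \<notin> ?C" using c0_h by auto
  ultimately have c0: "c0 \<in> X - Y" using inter(2) by blast
  obtain c1 where "c1 \<in> Y" and c1_h: "c1 = h - 1 \<or> c1 = h"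
    using Y(3) inter(1) by (auto simp: admissible_def)
  moreover have "c1 \<notin> ?C" using c1_h by auto
  ultimately have c1: "c1 \<in> Y - X" using inter(2) by blast
  show ?thesis
  proof (cases "x = h - 1 \<or> x = h")
    case True
    have "insert c1 ?C \<subseteq> insert c1 (X - {x})" "insert x ?C \<subseteq> insert x (Y - {c1})"
      using inter(2) x c1 by auto
    then show ?thesis
      using that[OF x c1 inter(3)] admissible_mono[OF admissible_insert_initial[OF c1_h]]
        admissible_mono[OF admissible_insert_initial[OF True]] inter(1) by blast
  next
    case False
    obtain y where y: "y \<in> Y - X" "y \<noteq> c1"
      using inter(4) c1 by (metis card_2_iff insertCI)
    have "insert c0 ?C \<subseteq> insert y (X - {x})" "insert c1 ?C \<subseteq> insert x (Y - {y})"
      using inter(2) x y c0 c1 c0_h False by auto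
    then show ?thesis
      using that[OF x y(1) inter(3)] admissible_mono[OF admissible_insert_initial[OF c0_h]]
        admissible_mono[OF admissible_insert_initial[OF c1_h]] inter(1) by blast
  qed
qed

lemma card_exchange:
  assumes "finite Z" "x \<in> Z" "y \<notin> Z"
  shows "card (insert y (Z - {x})) = card Z"
proof -
  have "card (insert y (Z - {x})) = Suc (card (Z - {x}))"
    using assms by (intro card_insert_disjoint) auto
  also have "\<dots> = card Z" by (rule card_Suc_Diff1[OF assms(1,2)])
  finally show ?thesis .
qed

lemma card_filter_exchange:
  assumes "finite Z" "x \<in> Z" "y \<notin> Z"
  shows "card {a \<in> insert y (Z - {x}). p a} + of_bool (p x) = card {a\<in>Z. p a} + of_bool (p y)"
proof -
  have filter_insert: "{a \<in> insert b A. p a} = (if p b then insert b {a\<in>A. p a} else {a\<in>A. p a})"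
    for b A by auto
  have "card {a\<in>Z. p a} = card {a \<in> insert x (Z - {x}). p a}"
    using assms(2) by (simp add: insert_absorb)
  moreover have "finite {a\<in>Z - {x}. p a}" "y \<notin> {a\<in>Z - {x}. p a}" "x \<notin> {a\<in>Z - {x}. p a}"
    using assms by auto
  ultimately show ?thesis unfolding filter_insert using assms(3) by (simp add: card_insert_if)
qed

lemma wI_exchange:
  assumes "finite Z" "x \<in> Z" "y \<notin> Z"
  shows "wI n (insert y (Z - {x})) + of_bool (card Z \<le> x \<and> x \<le> n - 1) =
    wI n Z + of_bool (card Z \<le> y \<and> y \<le> n - 1)"
  unfolding wI_def card_exchange[OF assms] by (rule card_filter_exchange[OF assms])

lemma wmono_exchange_le:
  assumes X: "finite X" and Y: "finite Y" and x: "x \<in> X - Y" and y: "y \<in> Y - X"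
    and le: "card X \<le> card Y" and "card X = card Y \<or> card Y \<le> y"
  shows "wmono n {#insert y (X - {x}), insert x (Y - {y})#} \<le> wmono n {#X, Y#}"
proof -
  have "wI n (insert y (X - {x})) + of_bool (card X \<le> x \<and> x \<le> n - 1) =
      wI n X + of_bool (card X \<le> y \<and> y \<le> n - 1)"
    using wI_exchange[OF X] x y by simp
  moreover have "wI n (insert x (Y - {y})) + of_bool (card Y \<le> y \<and> y \<le> n - 1) =
      wI n Y + of_bool (card Y \<le> x \<and> x \<le> n - 1)"
    using wI_exchange[OF Y] x y by simp
  ultimately show ?thesis
    using le assms(6) by (auto simp: wmono_def of_bool_def split: if_splits)
qed

lemma quot_in_w_nonzero_iff:
  "quot_v v (in_w n f) m \<noteq> 0 \<longleftrightarrow> f m \<noteq> 0 \<and> (\<forall>m'. f m' \<noteq> 0 \<longrightarrow> wmono n m \<le> wmono n m')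
     \<and> (\<forall>I\<in>#m. gale_le I (v ` {1..card I}))"
  unfolding quot_v_def in_w_def by auto

section \<open>A second monomial of minimal weight\<close>

context plucker_data
begin

context
  fixes h :: nat and X Y :: "nat set"
  assumes head_not_in_L: "\<not> P \<subseteq> set L"
    and tail_not_in_L: "\<not> (length J = length L \<and> Q \<subseteq> set L)"
    and card_X: "card X = length J" and card_Y: "card Y = length L"
    and X_Int_Y: "X \<inter> Y = set J \<inter> set L" and X_Un_Y: "X \<union> Y = set J \<union> set L"
    and Q_subset_X: "Q \<subseteq> X"
    and positive: "0 \<notin> set J \<union> set L"
    and admissible_X: "admissible h (length J) X" and admissible_Y: "admissible h (length L) Y"
begin

lemma finite_X: "finite X" and finite_Y: "finite Y" and zero_notin_X: "0 \<notin> X" and zero_notin_Y: "0 \<notin> Y"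
  using X_Un_Y positive finite_subset[of X "set J \<union> set L"] finite_subset[of Y "set J \<union> set L"] by auto

lemma card_diff_X_Y: "card (X - Y) = card (P - set L) + card (Q - set L)"
proof -
  have "card (X - Y) = card X - card (X \<inter> Y)" using finite_X by (simp add: card_Diff_subset_Int)
  also have "\<dots> = card (set J - set L)"
    using card_X X_Int_Y card_set_J by (simp add: card_Diff_subset_Int)
  also have "set J - set L = (P - set L) \<union> (Q - set L)" using set_J_eq by auto
  also have "card \<dots> = card (P - set L) + card (Q - set L)"
    using P_Q_disjoint by (intro card_Un_disjoint) auto
  finally show ?thesis .
qed

lemma one_le_card_head_diff: "1 \<le> card (P - set L)"
proof -
  have "P - set L \<noteq> {}" using head_not_in_L by auto
  then show ?thesis by (simp add: Suc_le_eq card_gt_0_iff)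
qed

lemma tail_Int_L_subset_Y: "Q \<inter> set L \<subseteq> Y"
  using X_Int_Y Q_subset_X set_J_eq by auto

lemma exchange_in_support_less:
  assumes less: "length J < length L"
  obtains x y where "x \<in> X - Y" "y \<in> Y - X" "x \<notin> Q" "card (P - set L) = 1"
    "admissible h (length J) (insert y (X - {x}))" "admissible h (length L) (insert x (Y - {y}))"
    "length L \<le> y" "insert y (X - {x}) \<noteq> Y"
proof -
  have "card (X - Y) \<noteq> 0" using card_diff_X_Y one_le_card_head_diff by linarith
  then have "X - Y \<noteq> {}" by (metis card.empty)
  moreover have "1 \<le> length J" using k_pos k_le_length_J by simp
  ultimately obtain x y where x: "X - Y = {x}" and y: "y \<in> Y - X" "length L \<le> y"
    and adm: "admissible h (length J) (insert y (X - {x}))" "admissible h (length L) (insert x (Y - {y}))"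
    using admissible_exchange_less[OF finite_X zero_notin_X card_X admissible_X
        finite_Y zero_notin_Y card_Y admissible_Y _ less] by blast
  have "card (P - set L) = 1" "card (Q - set L) = 0"
    using card_diff_X_Y x one_le_card_head_diff by auto
  then have "Q - set L = {}" by simp
  then have "x \<notin> Q" using tail_Int_L_subset_Y x by blast
  moreover have "x \<in> X" "y \<notin> X" using x y by auto
  then have "card (insert y (X - {x})) = length J"
    using card_exchange[OF finite_X] card_X by simp
  then have "insert y (X - {x}) \<noteq> Y" using less card_Y by auto
  ultimately show ?thesis
    using that[of x y] x y adm \<open>card (P - set L) = 1\<close> by blast
qed

lemma exchange_in_support_eq:
  assumes eq: "length J = length L"
  obtains x y where "x \<in> X - Y" "y \<in> Y - X" "x \<notin> Q" "card (P - set L) = 1"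
    "admissible h (length J) (insert y (X - {x}))" "admissible h (length L) (insert x (Y - {y}))"
    "insert y (X - {x}) \<noteq> Y"
proof -
  obtain q where q: "q \<in> Q - set L" using tail_not_in_L eq by auto
  then have Q1: "1 \<le> card (Q - set L)" by (auto simp: Suc_le_eq card_gt_0_iff)
  then have two: "2 \<le> card (X - Y)" using card_diff_X_Y one_le_card_head_diff by simp
  have "q \<in> X - Y" using q X_Int_Y Q_subset_X by auto
  then obtain x y where x: "x \<in> X - Y" "x \<noteq> q" and y: "y \<in> Y - X" and c2: "card (X - Y) = 2"
    and adm: "admissible h (length J) (insert y (X - {x}))" "admissible h (length J) (insert x (Y - {y}))"
    by (rule admissible_exchange_eq[OF finite_X card_X admissible_X finite_Y
          card_Y[folded eq] admissible_Y[folded eq] two])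
  have "card (P - set L) = 1" "card (Q - set L) = 1"
    using card_diff_X_Y c2 one_le_card_head_diff Q1 by auto
  moreover have "x \<notin> Q"
  proof
    assume "x \<in> Q"
    then have "x \<in> Q - set L" using x tail_Int_L_subset_Y by auto
    then show False using \<open>card (Q - set L) = 1\<close> q x(2) by (metis card_1_singletonE singletonD)
  qed
  moreover have "insert y (X - {x}) \<noteq> Y"
  proof
    assume "insert y (X - {x}) = Y"
    then have "X - Y \<subseteq> {x}" by auto
    then show False using c2 card_mono[of "{x}" "X - Y"] by simp
  qed
  ultimately show ?thesis using that x y adm eq by simp
qed

lemma exchange_in_support:
  obtains x y where "x \<in> X - Y" "y \<in> Y - X" "x \<notin> Q" "card (P - set L) = 1"
    "admissible h (length J) (insert y (X - {x}))" "admissible h (length L) (insert x (Y - {y}))"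
    "length J = length L \<or> length L \<le> y" "insert y (X - {x}) \<noteq> Y"
proof (cases "length J < length L")
  case True
  then show ?thesis using exchange_in_support_less that by metis
next
  case False
  then have "length J = length L" using length_J_le by simp
  then show ?thesis using exchange_in_support_eq that by metis
qed

lemma lighter_admissible_exchange:
  obtains X1 Y1 where "{#X1, Y1#} \<noteq> {#X, Y#}" "R {#X1, Y1#} \<noteq> 0"
    "wmono n {#X1, Y1#} \<le> wmono n {#X, Y#}"
    "X1 \<subseteq> set J \<union> set L" "card X1 = length J" "admissible h (length J) X1"
    "Y1 \<subseteq> set J \<union> set L" "card Y1 = length L" "admissible h (length L) Y1"
proof -
  obtain x y where x: "x \<in> X - Y" and y: "y \<in> Y - X" and "x \<notin> Q" "card (P - set L) = 1"
    and adm: "admissible h (length J) (insert y (X - {x}))" "admissible h (length L) (insert x (Y - {y}))"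
    and w: "length J = length L \<or> length L \<le> y" and ne: "insert y (X - {x}) \<noteq> Y"
    by (rule exchange_in_support)
  define X1 where "X1 = insert y (X - {x})"
  define Y1 where "Y1 = insert x (Y - {y})"
  have cards: "card X1 = length J" "card Y1 = length L"
    using card_exchange[OF finite_X, of x y] card_exchange[OF finite_Y, of y x] x y card_X card_Y
    unfolding X1_def Y1_def by simp_all
  have W1: "X1 \<subseteq> set J \<union> set L" "Y1 \<subseteq> set J \<union> set L"
    using X_Un_Y x y unfolding X1_def Y1_def by blast+
  have "Y1 = (set J \<union> set L - X1) \<union> (set J \<inter> set L)"
    using X_Int_Y X_Un_Y x y unfolding X1_def Y1_def by blast
  moreover have "set J \<inter> set L \<subseteq> X1" "Q \<subseteq> X1"
    using X_Int_Y Q_subset_X x y \<open>x \<notin> Q\<close> unfolding X1_def by blast+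
  ultimately have "R {#X1, Y1#} \<noteq> 0"
    using plucker_rel_nonzero_pair[OF head_not_in_L tail_not_in_L \<open>card (P - set L) = 1\<close> _ _ W1(1)
        cards(1)] by simp
  moreover have "{#X1, Y1#} \<noteq> {#X, Y#}"
    using ne y unfolding X1_def add_mset_pair_eq_iff by auto
  moreover have "wmono n {#X1, Y1#} \<le> wmono n {#X, Y#}"
    unfolding X1_def Y1_def
    by (rule wmono_exchange_le[OF finite_X finite_Y x y]) (use card_X card_Y length_J_le w in auto)
  ultimately show ?thesis using that W1 cards adm unfolding X1_def Y1_def by blast
qed

end

lemma exists_lighter_allowed_monomial:
  assumes n: "set J \<union> set L \<subseteq> {1..n}" "length L < n" and h: "1 \<le> h" "h < n"
    and R0: "R m0 \<noteq> 0" and allowed0: "\<forall>I\<in>#m0. gale_le I ((cox n \<circ> sref h) ` {1..card I})"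
  obtains m1 where "m1 \<noteq> m0" "R m1 \<noteq> 0" "wmono n m1 \<le> wmono n m0"
    "\<forall>I\<in>#m1. gale_le I ((cox n \<circ> sref h) ` {1..card I})"
proof -
  have head: "\<not> P \<subseteq> set L" using plucker_rel_vanishes_if_head_in_L R0 by blast
  have tail: "\<not> (length J = length L \<and> Q \<subseteq> set L)"
    using plucker_rel_vanishes_if_tail_in_L R0 by blast
  obtain X Y where m0: "m0 = {#X, Y#}" and XY: "card X = length J" "card Y = length L"
    "X \<inter> Y = set J \<inter> set L" "X \<union> Y = set J \<union> set L" "Q \<subseteq> X"
    using plucker_rel_support[OF R0] by blast
  have gale_iff: "gale_le I ((cox n \<circ> sref h) ` {1..card I}) \<longleftrightarrow> admissible h (card I) I"
    if "I \<subseteq> set J \<union> set L" "card I = length J \<or> card I = length L" for I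
  proof -
    have "I \<subseteq> {1..n}" using that(1) n(1) by blast
    moreover have "1 \<le> card I" "card I < n" using that(2) n(2) k_pos k_le_length_J length_J_le by auto
    ultimately show ?thesis by (rule gale_le_cox_sref_iff[OF h])
  qed
  have W: "X \<subseteq> set J \<union> set L" "Y \<subseteq> set J \<union> set L" using XY(4) by auto
  have adm: "admissible h (length J) X" "admissible h (length L) Y"
    using allowed0 gale_iff[OF W(1)] gale_iff[OF W(2)] XY(1,2) by (simp_all add: m0)
  have pos: "0 \<notin> set J \<union> set L" using n by auto
  obtain X1 Y1 where "{#X1, Y1#} \<noteq> {#X, Y#}" "R {#X1, Y1#} \<noteq> 0"
    "wmono n {#X1, Y1#} \<le> wmono n {#X, Y#}"
    and X1: "X1 \<subseteq> set J \<union> set L" "card X1 = length J" "admissible h (length J) X1"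
    and Y1: "Y1 \<subseteq> set J \<union> set L" "card Y1 = length L" "admissible h (length L) Y1"
    by (rule lighter_admissible_exchange[OF head tail XY pos adm])
  moreover have "\<forall>I\<in>#{#X1, Y1#}. gale_le I ((cox n \<circ> sref h) ` {1..card I})"
    using gale_iff[OF X1(1)] gale_iff[OF Y1(1)] X1 Y1 by simp
  ultimately show ?thesis using that m0 by blast
qed

end

theorem proposition4p7:
  fixes n h k :: nat and J L :: "nat list"
  assumes "n \<ge> 2" and "h \<in> {1..n-1}"
    and "distinct J" and "distinct L"
    and "set J \<subseteq> {1..n}" and "set L \<subseteq> {1..n}"
    and "1 \<le> length J" and "length J \<le> length L" and "length L \<le> n - 1"
    and "k \<in> {1..length J}"
  shows "\<not> degenerates_to_monomial n (cox n \<circ> sref h) (plucker_rel J L k)"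
proof
  let ?v = "cox n \<circ> sref h" and ?R = "plucker_rel J L k"
  assume "degenerates_to_monomial n ?v ?R"
  then obtain m0 where m0: "quot_v ?v (in_w n ?R) m0 \<noteq> 0"
    and unique: "\<And>m. quot_v ?v (in_w n ?R) m \<noteq> 0 \<Longrightarrow> m = m0"
    unfolding degenerates_to_monomial_def by (rule ex1E) blast
  from m0 have R0: "?R m0 \<noteq> 0" and minimal: "\<And>m. ?R m \<noteq> 0 \<Longrightarrow> wmono n m0 \<le> wmono n m"
    and allowed0: "\<forall>I\<in>#m0. gale_le I (?v ` {1..card I})"
    unfolding quot_in_w_nonzero_iff by auto
  interpret plucker_data J L k
    using assms(3,4,8,10) by unfold_locales auto
  have "set J \<union> set L \<subseteq> {1..n}" "length L < n" "1 \<le> h" "h < n"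
    using assms(1,2,5,6,9) by auto
  then obtain m1 where "m1 \<noteq> m0" "?R m1 \<noteq> 0" "wmono n m1 \<le> wmono n m0"
    "\<forall>I\<in>#m1. gale_le I (?v ` {1..card I})"
    by (rule exists_lighter_allowed_monomial[OF _ _ _ _ R0 allowed0])
  moreover from this(3) have "\<And>m. ?R m \<noteq> 0 \<Longrightarrow> wmono n m1 \<le> wmono n m"
    using minimal order_trans by blast
  ultimately have "quot_v ?v (in_w n ?R) m1 \<noteq> 0"
    by (simp add: quot_in_w_nonzero_iff)
  then show False using unique \<open>m1 \<noteq> m0\<close> by blast
qed

end
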